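(* (i) The commutator subgroup $H^\infty_+$ of $H^\infty$ is dense in $SO(4)$; (ii) $H^\infty$ is dense in $O(4)$; (iii) $\Sigma$ is dense in the unit sphere $\mathcal S$ of $\mathbb{R}^4$.
   Context: Let $\tau=(1+\sqrt5)/2$, $\tau'=(1-\sqrt5)/2$. Let $\Delta\subset\mathbb{R}^4$ be the set of 120 vectors consisting of: the 8 vectors obtained from $(\pm1,0,0,0)$ by permuting coordinates; the 16 vectors $\frac12(\pm1,\pm1,\pm1,\pm1)$; and the 96 vectors obtained from $\frac12(0,\pm1,\pm\tau',\pm\tau)$ (all sign choices) by even permutations of the coordinates. Let $\Delta'$ be the image of $\Delta$ under the Galois conjugation $\tau\leftrightarrow\tau'$ applied to each coordinate. For a unit vector $a$, $r_a(x)=x-2(x\cdot a)a$. Let $H_4$ (resp. $H_4'$) be the group generated by $r_a$, $a\in\Delta$ (resp. $a\in\Delta'$), and $H^\infty$ the subgroup of $O(4)$ generated by $H_4\cup H_4'$. Let $\Sigma=\{w(a): w\in H^\infty,\ a\in\Delta\cup\Delta'\}$. *)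

theory Defs
  imports "HOL-Analysis.Analysis"
begin

definition tau :: real where "tau = (1 + sqrt 5) / 2"
definition tau' :: real where "tau' = (1 - sqrt 5) / 2"

text \<open>The 120 root vectors, parametrised by the pair (t, t') that plays the role of
  (tau, tau'); Delta = roots tau tau', and its Galois conjugate Delta' = roots tau' tau
  (all other entries are rational, so conjugation only swaps tau and tau').\<close>
definition roots :: "real \<Rightarrow> real \<Rightarrow> (real^4) set" where
  "roots t t' =
     {(\<chi> i. if i = k then s else 0) | k s. s \<in> {-1, 1}}
   \<union> {(\<chi> i. s i / 2) | s. \<forall>i. s i \<in> {-1, 1}}
   \<union> {(\<chi> i. s (p i) * (vector [0, 1, t', t] :: real^4) $ (p i) / 2) | s p.
        (\<forall>i. s i \<in> {-1, 1}) \<and> p permutes (UNIV :: 4 set) \<and> evenperm p}"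

definition Delta :: "(real^4) set" where "Delta = roots tau tau'"
definition Delta' :: "(real^4) set" where "Delta' = roots tau' tau"

definition reflmat :: "real^4 \<Rightarrow> real^4^4" where
  "reflmat a = (\<chi> i j. (if i = j then 1 else 0) - 2 * a $ i * a $ j)"

inductive_set gen_group :: "(real^4^4) set \<Rightarrow> (real^4^4) set" for S where
  one: "mat 1 \<in> gen_group S"
| gen: "g \<in> S \<Longrightarrow> g \<in> gen_group S"
| mult: "g \<in> gen_group S \<Longrightarrow> h \<in> gen_group S \<Longrightarrow> g ** h \<in> gen_group S"
| inv: "g \<in> gen_group S \<Longrightarrow> matrix_inv g \<in> gen_group S"

definition H4 :: "(real^4^4) set" where "H4 = gen_group (reflmat ` Delta)"
definition H4' :: "(real^4^4) set" where "H4' = gen_group (reflmat ` Delta')"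
definition Hinf :: "(real^4^4) set" where "Hinf = gen_group (H4 \<union> H4')"

definition commutator_subgroup :: "(real^4^4) set \<Rightarrow> (real^4^4) set" where
  "commutator_subgroup G =
     gen_group {g ** h ** matrix_inv g ** matrix_inv h | g h. g \<in> G \<and> h \<in> G}"

definition O4 :: "(real^4^4) set" where "O4 = {A. orthogonal_matrix A}"
definition SO4 :: "(real^4^4) set" where "SO4 = {A. orthogonal_matrix A \<and> det A = 1}"

definition Sigma_roots :: "(real^4) set" where
  "Sigma_roots = {w *v a | w a. w \<in> Hinf \<and> a \<in> Delta \<union> Delta'}"

end

theory Submission
  imports Defs
begin

text \<open>For roots \<open>a, b \<in> \<Sigma>\<close> with \<open>a \<bullet> b = cos \<theta>\<close> the reflections \<open>r\<^sub>a, r\<^sub>b\<close> lie in \<open>H\<^sup>\<infinity>\<close>, and their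
  commutator \<open>(r\<^sub>a r\<^sub>b)\<^sup>2\<close> is the rotation by \<open>4\<theta>\<close> in the plane of \<open>a\<close> and \<open>b\<close>. For three explicit pairs
  \<open>32 cos 4\<theta>\<close> is an odd integer, which forces \<open>\<theta>/\<pi>\<close> to be irrational; so the closure of \<open>H\<^sup>\<infinity>\<^sub>+\<close>
  contains every rotation of these three planes. They are arranged around an orthonormal frame so
  that such rotations carry the root \<open>e\<^sub>1\<close> to any point of the sphere, hence \<open>\<Sigma>\<close> is dense.
  By continuity the closure of \<open>H\<^sup>\<infinity>\<close> then contains every reflection, and the closure of \<open>H\<^sup>\<infinity>\<^sub>+\<close>
  every product \<open>r\<^sub>u r\<^sub>v = r\<^sub>u r\<^sub>w r\<^sub>u r\<^sub>w\<close> of two reflections (\<open>r\<^sub>w\<close> exchanging \<open>u\<close> and \<open>v\<close>).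
  The Householder decomposition of an orthogonal matrix into reflections, of which there is an
  even number when the determinant is 1, finishes the proof.\<close>

section \<open>Reflections and plane rotations\<close>

definition reflect :: "'a::real_inner \<Rightarrow> 'a \<Rightarrow> 'a" where
  "reflect a x = x - (2 * (a \<bullet> x)) *\<^sub>R a"

definition plane_rotation :: "'a::real_inner \<Rightarrow> 'a \<Rightarrow> real \<Rightarrow> 'a \<Rightarrow> 'a" where
  "plane_rotation p q t x = x + ((cos t - 1) * (p \<bullet> x) - sin t * (q \<bullet> x)) *\<^sub>R p
                              + ((cos t - 1) * (q \<bullet> x) + sin t * (p \<bullet> x)) *\<^sub>R q"

lemma reflect_reflect: "a \<bullet> a = 1 \<Longrightarrow> reflect a (reflect a x) = x"
  unfolding reflect_def by (simp add: inner_diff_right algebra_simps)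

lemma plane_rotation_plane_rotation:
  assumes "p \<bullet> p = 1" "q \<bullet> q = 1" "p \<bullet> q = 0"
  shows "plane_rotation p q s (plane_rotation p q t x) = plane_rotation p q (s + t) x"
  using assms unfolding plane_rotation_def
  by (simp add: inner_add_right inner_diff_right inner_commute cos_add sin_add algebra_simps)

lemma linear_plane_rotation: "linear (plane_rotation p q t)"
  by (rule linearI) (simp_all add: plane_rotation_def inner_add_right algebra_simps)

lemma plane_rotation_first:
  "p \<bullet> p = 1 \<Longrightarrow> q \<bullet> q = 1 \<Longrightarrow> p \<bullet> q = 0 \<Longrightarrow>
   plane_rotation p q t p = cos t *\<^sub>R p + sin t *\<^sub>R q"
  by (simp add: plane_rotation_def inner_commute algebra_simps)

lemma plane_rotation_orthogonal:
  "p \<bullet> z = 0 \<Longrightarrow> q \<bullet> z = 0 \<Longrightarrow> plane_rotation p q t z = z"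
  by (simp add: plane_rotation_def)

lemma reflect_reflect_eq_plane_rotation:
  assumes a: "a \<bullet> a = 1" and q: "q \<bullet> q = 1" "a \<bullet> q = 0"
    and b: "b = cos \<theta> *\<^sub>R a + sin \<theta> *\<^sub>R q"
  shows "reflect a (reflect b x) = plane_rotation a q (- (2 * \<theta>)) x"
proof -
  define \<alpha> \<beta> where "\<alpha> = a \<bullet> x" and "\<beta> = q \<bullet> x"
  have "reflect a (reflect b x)
      = x + (2 * cos \<theta> * (cos \<theta> * \<alpha> + sin \<theta> * \<beta>) - 2 * \<alpha>) *\<^sub>R a
          - (2 * sin \<theta> * (cos \<theta> * \<alpha> + sin \<theta> * \<beta>)) *\<^sub>R q"
    using a q unfolding reflect_def b \<alpha>_def \<beta>_def
    by (simp add: inner_add_left inner_add_right inner_diff_right inner_commute algebra_simps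
        flip: scaleR_add_left)
  also have "\<dots> = plane_rotation a q (- (2 * \<theta>)) x"
  proof -
    have "2 * cos \<theta> * (cos \<theta> * \<alpha> + sin \<theta> * \<beta>) - 2 * \<alpha>
        = (cos (2 * \<theta>) - 1) * \<alpha> + sin (2 * \<theta>) * \<beta>"
      unfolding cos_double_cos sin_double by (simp add: algebra_simps power2_eq_square)
    moreover have "- (2 * sin \<theta> * (cos \<theta> * \<alpha> + sin \<theta> * \<beta>))
        = (cos (2 * \<theta>) - 1) * \<beta> - sin (2 * \<theta>) * \<alpha>"
      unfolding cos_double_sin sin_double by (simp add: algebra_simps power2_eq_square)
    ultimately show ?thesis
      unfolding plane_rotation_def \<alpha>_def[symmetric] \<beta>_def[symmetric]
      by (simp add: algebra_simps)
  qed
  finally show ?thesis .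
qed

lemma reflect_commutator_eq_plane_rotation:
  assumes "a \<bullet> a = 1" "q \<bullet> q = 1" "a \<bullet> q = 0"
    and "b = cos \<theta> *\<^sub>R a + sin \<theta> *\<^sub>R q"
  shows "reflect a (reflect b (reflect a (reflect b x))) = plane_rotation a q (- (4 * \<theta>)) x"
  using assms by (simp add: reflect_reflect_eq_plane_rotation plane_rotation_plane_rotation)

lemma plane_rotation_change_frame:
  assumes a: "a \<bullet> a = 1" and q: "q \<bullet> q = 1" and aq: "a \<bullet> q = 0"
    and p: "p = \<alpha> *\<^sub>R a + \<beta> *\<^sub>R q" and p': "p' = \<gamma> *\<^sub>R a + \<delta> *\<^sub>R q"
    and pp: "p \<bullet> p = 1" and pp': "p' \<bullet> p' = 1" and ppo: "p \<bullet> p' = 0"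
  obtains e where "e = 1 \<or> e = -1" "\<And>t. plane_rotation p p' t = plane_rotation a q (e * t)"
proof -
  have qa: "q \<bullet> a = 0" using aq by (simp add: inner_commute)
  have n1: "\<alpha>\<^sup>2 + \<beta>\<^sup>2 = 1" using pp unfolding p
    by (simp add: inner_add_left inner_add_right a q aq qa power2_eq_square)
  have n3: "\<alpha> * \<gamma> + \<beta> * \<delta> = 0" using ppo unfolding p p'
    by (simp add: inner_add_left inner_add_right a q aq qa mult.commute)
  have n2: "\<gamma>\<^sup>2 + \<delta>\<^sup>2 = 1" using pp' unfolding p'
    by (simp add: inner_add_left inner_add_right a q aq qa power2_eq_square)
  define e where "e = \<alpha> * \<delta> - \<beta> * \<gamma>"
  \<comment> \<open>\<open>e = \<plusminus>1\<close> is the orientation of \<open>(p, p')\<close> relative to \<open>(a, q)\<close>\<close>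
  have \<gamma>: "\<gamma> = - e * \<beta>" and \<delta>: "\<delta> = e * \<alpha>" unfolding e_def using n1 n3 by algebra+
  have "e\<^sup>2 = 1" unfolding e_def using n1 n2 n3 by algebra
  then have e: "e = 1 \<or> e = -1" by (simp add: power2_eq_1_iff)
  have "plane_rotation p p' t x = plane_rotation a q (e * t) x" for t x
  proof -
    define A B where "A = a \<bullet> x" and "B = q \<bullet> x"
    define u v where "u = (cos t - 1) * (\<alpha> * A + \<beta> * B) - sin t * (\<gamma> * A + \<delta> * B)"
      and "v = (cos t - 1) * (\<gamma> * A + \<delta> * B) + sin t * (\<alpha> * A + \<beta> * B)"
    have "plane_rotation p p' t x = x + u *\<^sub>R p + v *\<^sub>R p'"
      unfolding plane_rotation_def u_def v_def A_def B_def p p' by (simp add: inner_add_left)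
    also have "\<dots> = x + (u * \<alpha> + v * \<gamma>) *\<^sub>R a + (u * \<beta> + v * \<delta>) *\<^sub>R q"
      unfolding p p' by (simp add: algebra_simps)
    also have "u * \<alpha> + v * \<gamma> = (cos (e * t) - 1) * A - sin (e * t) * B"
      using e n1 unfolding u_def v_def \<gamma> \<delta> by (auto simp: algebra_simps power2_eq_square) algebra+
    also have "u * \<beta> + v * \<delta> = (cos (e * t) - 1) * B + sin (e * t) * A"
      using e n1 unfolding u_def v_def \<gamma> \<delta> by (auto simp: algebra_simps power2_eq_square) algebra+
    finally show ?thesis unfolding plane_rotation_def A_def B_def .
  qed
  with e that show thesis by blast
qed

lemma reflect_swap:
  fixes u v :: "'a::real_inner"
  assumes u: "u \<bullet> u = 1" and v: "v \<bullet> v = 1" and "u \<noteq> v"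
  defines "w \<equiv> (1 / norm (u - v)) *\<^sub>R (u - v)"
  shows "w \<bullet> w = 1" "reflect w u = v" "\<And>z. z \<bullet> u = 0 \<Longrightarrow> z \<bullet> v = 0 \<Longrightarrow> reflect w z = z"
proof -
  define n where "n = norm (u - v)"
  have n: "n > 0" using \<open>u \<noteq> v\<close> by (simp add: n_def)
  have n2: "n\<^sup>2 = 2 - 2 * (u \<bullet> v)"
    unfolding n_def power2_norm_eq_inner using u v
    by (simp add: inner_diff_left inner_diff_right inner_commute)
  show "w \<bullet> w = 1"
    using n by (simp add: w_def n_def[symmetric] power2_eq_square flip: power2_norm_eq_inner)
  have wu: "w \<bullet> u = (1 - u \<bullet> v) / n"
    using u by (simp add: w_def n_def[symmetric] inner_diff_left inner_diff_right inner_commute)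
  have "reflect w u = u - (2 * ((1 - u \<bullet> v) / n) / n) *\<^sub>R (u - v)"
    unfolding reflect_def wu by (simp add: w_def n_def[symmetric])
  also have "2 * ((1 - u \<bullet> v) / n) / n = 1"
    using n n2 by (simp add: field_simps power2_eq_square)
  finally show "reflect w u = v" by simp
  show "reflect w z = z" if "z \<bullet> u = 0" "z \<bullet> v = 0" for z
    using that by (simp add: reflect_def w_def inner_diff_right inner_commute)
qed

lemma unit_vector_eq_plane_rotations:
  assumes unit: "e \<bullet> e = 1" "f1 \<bullet> f1 = 1" "f2 \<bullet> f2 = 1" "f3 \<bullet> f3 = 1"
    and orth: "e \<bullet> f1 = 0" "e \<bullet> f2 = 0" "e \<bullet> f3 = 0" "f1 \<bullet> f2 = 0" "f1 \<bullet> f3 = 0" "f2 \<bullet> f3 = 0"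
    and y: "y = c1 *\<^sub>R f1 + c2 *\<^sub>R f2 + c3 *\<^sub>R e + c4 *\<^sub>R f3" "y \<bullet> y = 1"
  obtains \<alpha> \<beta> \<gamma> where
    "y = plane_rotation e f3 \<gamma> (plane_rotation f2 f1 \<alpha> (plane_rotation e f2 \<beta> e))"
proof -
  have orth': "f1 \<bullet> e = 0" "f2 \<bullet> e = 0" "f3 \<bullet> e = 0" "f2 \<bullet> f1 = 0" "f3 \<bullet> f1 = 0" "f3 \<bullet> f2 = 0"
    using orth by (simp_all add: inner_commute)
  obtain r \<gamma> where c34: "c3 = r * cos \<gamma>" "c4 = r * sin \<gamma>" using polar_Ex by blast
  obtain s \<alpha> where c21: "c2 = s * cos \<alpha>" "c1 = s * sin \<alpha>" using polar_Ex by blast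
  have "c1\<^sup>2 + c2\<^sup>2 + c3\<^sup>2 + c4\<^sup>2 = 1"
    using y unit orth orth' by (simp add: inner_add_left inner_add_right power2_eq_square)
  then have "r\<^sup>2 + s\<^sup>2 = 1"
    unfolding c34 c21 by (simp add: power_mult_distrib algebra_simps flip: distrib_left)
  then obtain \<beta> where \<beta>: "r = cos \<beta>" "s = sin \<beta>" using sincos_total_2pi by metis
  have "plane_rotation e f3 \<gamma> (plane_rotation f2 f1 \<alpha> (plane_rotation e f2 \<beta> e))
      = plane_rotation e f3 \<gamma> (plane_rotation f2 f1 \<alpha> (cos \<beta> *\<^sub>R e + sin \<beta> *\<^sub>R f2))"
    using unit orth by (simp add: plane_rotation_first)
  also have "\<dots> = plane_rotation e f3 \<gamma> (cos \<beta> *\<^sub>R e + sin \<beta> *\<^sub>R (cos \<alpha> *\<^sub>R f2 + sin \<alpha> *\<^sub>R f1))"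
    using unit orth orth'
    by (simp add: linear_add[OF linear_plane_rotation] linear_scale[OF linear_plane_rotation]
        plane_rotation_first plane_rotation_orthogonal)
  also have "\<dots> = cos \<beta> *\<^sub>R (cos \<gamma> *\<^sub>R e + sin \<gamma> *\<^sub>R f3)
      + sin \<beta> *\<^sub>R (cos \<alpha> *\<^sub>R f2 + sin \<alpha> *\<^sub>R f1)"
    using unit orth orth'
    by (simp add: linear_add[OF linear_plane_rotation] linear_scale[OF linear_plane_rotation]
        plane_rotation_first plane_rotation_orthogonal)
  also have "\<dots> = y"
    unfolding y(1) c34 c21 \<beta> by (simp add: algebra_simps)
  finally show thesis using that by blast
qed

section \<open>Angles incommensurable with \<open>2\<pi>\<close>\<close>

fun scaled_cos_seq :: "int \<Rightarrow> nat \<Rightarrow> int" where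
  "scaled_cos_seq k 0 = 2"
| "scaled_cos_seq k (Suc 0) = k"
| "scaled_cos_seq k (Suc (Suc n)) = k * scaled_cos_seq k (Suc n) - 256 * scaled_cos_seq k n"

lemma scaled_cos_seq_eq:
  assumes k: "32 * cos x = of_int k"
  shows "of_int (scaled_cos_seq k n) = 2 * 16 ^ n * cos (real n * x)"
proof (induction n rule: induct_nat_012)
  case (ge2 n)
  have "of_int (scaled_cos_seq k (Suc (Suc n)))
      = 32 * cos x * of_int (scaled_cos_seq k (Suc n)) - 256 * of_int (scaled_cos_seq k n)"
    by (simp add: k)
  also have "\<dots> = 2 * 16 ^ Suc (Suc n) * (2 * cos x * cos (real (Suc n) * x) - cos (real n * x))"
    using ge2 by (simp add: algebra_simps)
  also have "2 * cos x * cos (real (Suc n) * x) - cos (real n * x) = cos (real (Suc (Suc n)) * x)"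
    using cos_add[of "real (Suc n) * x" x] cos_diff[of "real (Suc n) * x" x]
    by (simp add: algebra_simps)
  finally show ?case .
qed (use k in simp_all)

lemma odd_scaled_cos_seq: "odd k \<Longrightarrow> odd (scaled_cos_seq k (Suc n))"
  by (induction n) simp_all

lemma irrational_angle_of_cos_odd_div_32:
  assumes k: "32 * cos x = of_int k" and "odd k"
  shows "x / (2 * pi) \<notin> \<rat>"
proof
  assume "x / (2 * pi) \<in> \<rat>"
  then obtain a b where ab: "x / (2 * pi) = of_int a / of_int b" and b: "b > 0"
    by (metis Rats_cases')
  define n where "n = nat b"
  have "real n * x = 2 * pi * of_int a"
    using ab b by (simp add: n_def field_simps)
  then have "cos (real n * x) = 1"
    using cos_int_2pin[of a] by (simp add: mult.commute)
  have "scaled_cos_seq k n = 2 * 16 ^ n"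
  proof -
    have "(of_int (scaled_cos_seq k n) :: real) = of_int (2 * 16 ^ n)"
      using scaled_cos_seq_eq[OF k, of n] \<open>cos (real n * x) = 1\<close> by simp
    then show ?thesis by (simp only: of_int_eq_iff)
  qed
  moreover have "odd (scaled_cos_seq k n)"
    using odd_scaled_cos_seq[OF \<open>odd k\<close>, of "n - 1"] b by (simp add: n_def)
  ultimately show False by simp
qed

lemma orthogonal_matrix_inner:
  assumes "orthogonal_matrix (Q :: real^'n^'n)"
  shows "(Q *v x) \<bullet> (Q *v y) = x \<bullet> y"
  using assms orthogonal_transformation_matrix[of "(*v) Q"]
  by (simp add: orthogonal_transformation_def)

lemma matrix_inv_orthogonal:
  assumes "orthogonal_matrix (Q :: real^'n^'n)"
  shows "matrix_inv Q = transpose Q"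
proof -
  have inverse: "Q ** transpose Q = mat 1 \<and> transpose Q ** Q = mat 1"
    using assms by (simp add: orthogonal_matrix_def)
  then have "Q ** matrix_inv Q = mat 1"
    unfolding matrix_inv_def by (rule someI2) blast
  then have "transpose Q ** (Q ** matrix_inv Q) = transpose Q" by simp
  with inverse show ?thesis by (simp add: matrix_mul_assoc)
qed

lemma matrix_fixing_axes_eq_mat_1:
  assumes "\<And>j. B *v axis j 1 = (axis j 1 :: real^'n)"
  shows "B = mat 1"
proof -
  have "B $ i $ j = (B *v axis j 1) $ i" for i j
    by (simp add: matrix_vector_mult_basis column_def)
  then show ?thesis using assms by (simp add: vec_eq_iff axis_def mat_def)
qed

lemma closed_orthogonal_matrices: "closed {A :: real^'n^'n. orthogonal_matrix A}"
proof -
  have "continuous_on UNIV (\<lambda>A :: real^'n^'n. transpose A ** A)"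
    unfolding transpose_def matrix_matrix_mult_def by (intro continuous_intros)
  then show ?thesis
    unfolding orthogonal_matrix by (rule closed_Collect_eq[OF _ continuous_on_const])
qed

lemma closed_rotation_matrices: "closed {A :: real^'n^'n. orthogonal_matrix A \<and> det A = 1}"
proof -
  have "continuous_on UNIV (\<lambda>A :: real^'n^'n. det A)"
    unfolding det_def by (intro continuous_intros)
  then have "closed {A :: real^'n^'n. det A = 1}"
    by (rule closed_Collect_eq[OF _ continuous_on_const])
  then show ?thesis
    using closed_Int[OF closed_orthogonal_matrices] by (simp add: Collect_conj_eq)
qed

lemma image2_closure_subset:
  assumes "continuous_on UNIV (\<lambda>z. f (fst z) (snd z))"
    and "\<And>x y. x \<in> A \<Longrightarrow> y \<in> B \<Longrightarrow> f x y \<in> C"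
    and "x \<in> closure A" "y \<in> closure B"
  shows "f x y \<in> closure C"
proof -
  have "(\<lambda>z. f (fst z) (snd z)) ` closure (A \<times> B) \<subseteq> closure C"
    using assms(1,2) closure_subset
    by (intro image_closure_subset closed_closure) (auto intro: continuous_on_subset closure_subset[THEN subsetD])
  with assms(3,4) show ?thesis by (force simp: closure_Times)
qed

lemma continuous_on_matrix_mult:
  "continuous_on S (\<lambda>z. fst z ** (snd z :: real^'n^'n))"
  unfolding matrix_matrix_mult_def by (intro continuous_intros)

lemma closure_matrix_mult_closed:
  fixes G :: "(real^'n^'n) set"
  assumes "\<And>A B. A \<in> G \<Longrightarrow> B \<in> G \<Longrightarrow> A ** B \<in> G"
  shows "A \<in> closure G \<Longrightarrow> B \<in> closure G \<Longrightarrow> A ** B \<in> closure G"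
  using image2_closure_subset[OF continuous_on_matrix_mult] assms .

definition plane_rotation_matrix :: "real^'n \<Rightarrow> real^'n \<Rightarrow> real \<Rightarrow> real^'n^'n" where
  "plane_rotation_matrix p q t = mat 1 + (\<chi> i j.
     (cos t - 1) * (p $ i * p $ j + q $ i * q $ j) + sin t * (q $ i * p $ j - p $ i * q $ j))"

lemma plane_rotation_matrix_vector_mult:
  "plane_rotation_matrix p q t *v x = plane_rotation p q t x"
  unfolding plane_rotation_matrix_def matrix_vector_mult_add_rdistrib matrix_vector_mul_lid
  by (simp add: vec_eq_iff matrix_vector_mult_def plane_rotation_def inner_vec_def
      sum.distrib sum_distrib_left sum_subtractf algebra_simps)

lemma plane_rotation_matrix_mult:
  assumes "p \<bullet> p = 1" "q \<bullet> q = 1" "p \<bullet> q = 0"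
  shows "plane_rotation_matrix p q s ** plane_rotation_matrix p q t = plane_rotation_matrix p q (s + t)"
  using assms
  by (simp add: matrix_eq plane_rotation_matrix_vector_mult plane_rotation_plane_rotation
      flip: matrix_vector_mul_assoc)

lemma plane_rotation_matrix_periodic:
  "plane_rotation_matrix p q (t + 2 * pi * of_int h) = plane_rotation_matrix p q t"
  by (simp add: plane_rotation_matrix_def cos_add sin_add)

lemma continuous_on_plane_rotation_matrix:
  "continuous_on S (plane_rotation_matrix p q)"
  unfolding plane_rotation_matrix_def by (intro continuous_intros)

lemma multiples_mod_2pi_dense:
  assumes irrational: "x / (2 * pi) \<notin> \<rat>"
  shows "t \<in> closure {real (Suc n) * x + 2 * pi * of_int h | n h. True}"
  unfolding closure_approachable
proof (intro allI impI)
  fix e :: real assume "e > 0"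
  then have "e / (2 * pi) > 0" by simp
  then obtain h k where k: "k > 0"
    and hk: "\<bar>of_int k * (x / (2 * pi)) - of_int h - t / (2 * pi)\<bar> < e / (2 * pi)"
    using sequence_of_fractional_parts_is_dense[OF irrational] by metis
  define n where "n = nat k - 1"
  have n: "real (Suc n) = of_int k" using k by (simp add: n_def)
  have "real (Suc n) * x + 2 * pi * of_int (- h) - t
      = 2 * pi * (of_int k * (x / (2 * pi)) - of_int h - t / (2 * pi))"
    unfolding n by (simp add: field_simps)
  then have "\<bar>real (Suc n) * x + 2 * pi * of_int (- h) - t\<bar>
      = 2 * pi * \<bar>of_int k * (x / (2 * pi)) - of_int h - t / (2 * pi)\<bar>"
    by (simp add: abs_mult)
  also have "\<dots> < 2 * pi * (e / (2 * pi))"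
    using hk by (intro mult_strict_left_mono) auto
  finally have "dist (real (Suc n) * x + 2 * pi * of_int (- h)) t < e"
    by (simp add: dist_real_def)
  then show "\<exists>y\<in>{real (Suc n) * x + 2 * pi * of_int h | n h. True}. dist y t < e" by blast
qed

lemma plane_rotation_matrix_in_closure:
  assumes pq: "p \<bullet> p = 1" "q \<bullet> q = 1" "p \<bullet> q = 0"
    and mult: "\<And>A B. A \<in> G \<Longrightarrow> B \<in> G \<Longrightarrow> A ** B \<in> G"
    and x: "plane_rotation_matrix p q x \<in> G" and irrational: "x / (2 * pi) \<notin> \<rat>"
  shows "plane_rotation_matrix p q t \<in> closure G"
proof -
  define T where "T = {real (Suc n) * x + 2 * pi * of_int h | n h. True}"
  have multiples: "plane_rotation_matrix p q (real (Suc n) * x) \<in> G" for n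
  proof (induction n)
    case (Suc n)
    have "plane_rotation_matrix p q (real (Suc (Suc n)) * x)
        = plane_rotation_matrix p q x ** plane_rotation_matrix p q (real (Suc n) * x)"
      by (simp add: plane_rotation_matrix_mult[OF pq] algebra_simps)
    with Suc x show ?case by (simp add: mult)
  qed (use x in simp)
  have "plane_rotation_matrix p q ` T \<subseteq> G"
    using multiples by (auto simp: T_def plane_rotation_matrix_periodic)
  then have "plane_rotation_matrix p q ` closure T \<subseteq> closure G"
    using closure_subset
    by (intro image_closure_subset[OF continuous_on_plane_rotation_matrix closed_closure]) blast
  moreover have "t \<in> closure T"
    unfolding T_def by (rule multiples_mod_2pi_dense[OF irrational])
  ultimately show ?thesis by blast
qed

lemma reflmat_vector_mult: "reflmat a *v x = reflect a x"
  by (simp add: vec_eq_iff matrix_vector_mult_def reflmat_def reflect_def inner_vec_def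
      sum_4 forall_4 algebra_simps)

lemma transpose_reflmat: "transpose (reflmat a) = reflmat a"
  unfolding transpose_def reflmat_def vec_eq_iff by (simp add: mult.commute)

lemma reflmat_reflmat: "a \<bullet> a = 1 \<Longrightarrow> reflmat a ** reflmat a = mat 1"
  by (simp add: matrix_eq reflmat_vector_mult reflect_reflect flip: matrix_vector_mul_assoc)

lemma orthogonal_matrix_reflmat: "a \<bullet> a = 1 \<Longrightarrow> orthogonal_matrix (reflmat a)"
  unfolding orthogonal_matrix_def transpose_reflmat by (simp add: reflmat_reflmat)

lemma matrix_inv_reflmat: "a \<bullet> a = 1 \<Longrightarrow> matrix_inv (reflmat a) = reflmat a"
  by (simp add: matrix_inv_orthogonal orthogonal_matrix_reflmat transpose_reflmat)

lemma reflmat_conjugate: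
  assumes Q: "orthogonal_matrix Q"
  shows "reflmat (Q *v a) = Q ** reflmat a ** transpose Q"
proof -
  have "Q *v (transpose Q *v x) = x" for x
    using Q by (simp only: matrix_vector_mul_assoc orthogonal_matrix_def matrix_vector_mul_lid)
  moreover have "a \<bullet> (transpose Q *v x) = (Q *v a) \<bullet> x" for x
    by (metis dot_lmul_matrix vector_transpose_matrix)
  ultimately show ?thesis
    by (simp add: matrix_eq reflmat_vector_mult reflect_def matrix_vector_mult_diff_distrib
        matrix_vector_mult_scaleR flip: matrix_vector_mul_assoc)
qed

lemma continuous_on_reflmat: "continuous_on S reflmat"
  unfolding reflmat_def by (intro continuous_intros)

lemma det_reflmat:
  assumes u: "u \<bullet> u = 1"
  shows "det (reflmat u) = -1"
proof -
  have e: "axis 1 1 \<bullet> (axis 1 1 :: real^4) = 1" by (simp add: inner_axis_axis)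
  have "det (reflmat (axis 1 1)) = (\<Prod>i\<in>UNIV. reflmat (axis 1 1) $ i $ i)"
    by (rule det_diagonal) (auto simp: reflmat_def axis_def)
  also have "\<dots> = reflmat (axis 1 1) $ 1 $ 1 * (\<Prod>i\<in>UNIV - {1}. reflmat (axis 1 1) $ i $ i)"
    by (simp add: prod.remove)
  also have "\<dots> = -1" by (simp add: reflmat_def axis_def)
  finally have det_e: "det (reflmat (axis 1 1)) = -1" .
  show ?thesis
  proof (cases "axis 1 1 = u")
    case False
    define w where "w = (1 / norm (axis 1 1 - u)) *\<^sub>R (axis 1 1 - u)"
    note swap = reflect_swap[OF e u False, folded w_def]
    have "reflmat u = reflmat w ** reflmat (axis 1 1) ** reflmat w"
      using reflmat_conjugate[OF orthogonal_matrix_reflmat[OF swap(1)], of "axis 1 1"] swap(2)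
      by (simp add: reflmat_vector_mult transpose_reflmat)
    moreover have "det (reflmat w) * det (reflmat w) = 1"
      using swap(1) by (simp flip: det_mul add: reflmat_reflmat)
    ultimately show ?thesis using det_e by (simp add: det_mul)
  qed (use det_e in simp)
qed

definition reflmat_prod :: "(real^4) list \<Rightarrow> real^4^4" where
  "reflmat_prod us = foldr (\<lambda>u M. reflmat u ** M) us (mat 1)"

lemma reflmat_prod_simps [simp]:
  "reflmat_prod [] = mat 1" "reflmat_prod (u # us) = reflmat u ** reflmat_prod us"
  by (simp_all add: reflmat_prod_def)

lemma det_reflmat_prod: "\<forall>u\<in>set us. u \<bullet> u = 1 \<Longrightarrow> det (reflmat_prod us) = (-1) ^ length us"
  by (induction us) (simp_all add: det_mul det_reflmat)

lemma reflmat_mult_fixing_axes: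
  assumes B: "orthogonal_matrix B" and J: "\<forall>j\<in>J. B *v axis j 1 = axis j 1"
    and k: "k \<notin> J" "B *v axis k 1 \<noteq> axis k 1"
  obtains w where "w \<bullet> w = 1" "orthogonal_matrix (reflmat w ** B)"
    "\<forall>j\<in>insert k J. (reflmat w ** B) *v axis j 1 = axis j 1"
proof -
  define x where "x = B *v axis k 1"
  have "x \<bullet> x = 1" using orthogonal_matrix_inner[OF B] by (simp add: x_def)
  have x_perp: "axis j 1 \<bullet> x = 0" if "j \<in> J" for j
    using orthogonal_matrix_inner[OF B, of "axis j 1" "axis k 1"] J that k(1)
    by (auto simp: x_def inner_axis_axis)
  define w where "w = (1 / norm (x - axis k 1)) *\<^sub>R (x - axis k 1)"
  have "axis k 1 \<bullet> axis k (1::real) = 1" by (simp add: inner_axis_axis)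
  note swap = reflect_swap[OF \<open>x \<bullet> x = 1\<close> this k(2)[folded x_def], folded w_def]
  have "(reflmat w ** B) *v axis j 1 = axis j 1" if "j \<in> insert k J" for j
  proof -
    have "(reflmat w ** B) *v axis j 1 = reflect w (B *v axis j 1)"
      by (simp add: reflmat_vector_mult flip: matrix_vector_mul_assoc)
    moreover have "axis j 1 \<bullet> axis k (1::real) = 0" if "j \<in> J"
      using that k(1) by (auto simp: inner_axis_axis)
    ultimately show ?thesis
      using that swap x_perp J by (auto simp: x_def)
  qed
  moreover have "orthogonal_matrix (reflmat w ** B)"
    using swap B by (simp add: orthogonal_matrix_mul orthogonal_matrix_reflmat)
  ultimately show thesis using that swap(1) by blast
qed

lemma orthogonal_matrix_fixing_axes_eq_reflmat_prod:
  assumes "orthogonal_matrix B" "\<forall>j\<in>J. B *v axis j 1 = axis j 1"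
  shows "\<exists>us. (\<forall>u\<in>set us. u \<bullet> u = 1) \<and> B = reflmat_prod us"
  using assms
proof (induction "card (- J)" arbitrary: B J)
  case 0
  then have "J = UNIV" by auto
  with 0 have "B = mat 1" by (simp add: matrix_fixing_axes_eq_mat_1)
  then show ?case by (intro exI[of _ "[]"]) simp
next
  case (Suc n)
  then have "- J \<noteq> {}" by auto
  then obtain k where k: "k \<notin> J" by auto
  have "- insert k J = - J - {k}" by auto
  then have n: "n = card (- insert k J)"
    using Suc(2) k by (simp add: card_Diff_singleton)
  show ?case
  proof (cases "B *v axis k 1 = axis k 1")
    case True
    then show ?thesis using Suc by (intro Suc(1)[OF n]) auto
  next
    case False
    then obtain w where w: "w \<bullet> w = 1" and "orthogonal_matrix (reflmat w ** B)"
      "\<forall>j\<in>insert k J. (reflmat w ** B) *v axis j 1 = axis j 1"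
      using reflmat_mult_fixing_axes[OF Suc(3,4) k] by blast
    then obtain us where "\<forall>u\<in>set us. u \<bullet> u = 1" "reflmat w ** B = reflmat_prod us"
      using Suc(1)[OF n, of "reflmat w ** B"] by blast
    moreover have "B = reflmat w ** (reflmat w ** B)"
      using w by (simp add: matrix_mul_assoc reflmat_reflmat)
    ultimately show ?thesis using w by (intro exI[of _ "w # us"]) auto
  qed
qed

lemma orthogonal_matrix_eq_reflmat_prod:
  "orthogonal_matrix A \<Longrightarrow> \<exists>us. (\<forall>u\<in>set us. u \<bullet> u = 1) \<and> A = reflmat_prod us"
  using orthogonal_matrix_fixing_axes_eq_reflmat_prod[of A "{}"] by simp

section \<open>The groups \<open>H\<^sup>\<infinity>\<close>, \<open>H\<^sup>\<infinity>\<^sub>+\<close> and the roots \<open>\<Sigma>\<close>\<close>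

lemma gen_group_least:
  assumes "S \<subseteq> M" "mat 1 \<in> M"
    and "\<And>A B. A \<in> M \<Longrightarrow> B \<in> M \<Longrightarrow> A ** B \<in> M" "\<And>A. A \<in> M \<Longrightarrow> matrix_inv A \<in> M"
  shows "gen_group S \<subseteq> M"
proof
  fix A assume "A \<in> gen_group S"
  then show "A \<in> M" by induction (use assms in auto)
qed

lemma gen_group_subset_O4: "S \<subseteq> O4 \<Longrightarrow> gen_group S \<subseteq> O4"
  by (rule gen_group_least)
     (auto simp: O4_def orthogonal_matrix_id orthogonal_matrix_mul matrix_inv_orthogonal)

lemma gen_group_subset_SO4: "S \<subseteq> SO4 \<Longrightarrow> gen_group S \<subseteq> SO4"
  by (rule gen_group_least)
     (auto simp: SO4_def orthogonal_matrix_id orthogonal_matrix_mul det_mul matrix_inv_orthogonal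
       det_transpose)

lemma roots_unit:
  assumes t: "t'\<^sup>2 + t\<^sup>2 = 3" and a: "a \<in> roots t t'"
  shows "a \<bullet> a = 1"
proof -
  have sign: "s \<in> {-1, 1} \<Longrightarrow> s * s = (1::real)" for s by auto
  consider (axis) k s where "s \<in> {-1, 1}" "a = (\<chi> i. if i = k then s else 0)"
    | (half) s where "\<forall>i. s i \<in> {-1, 1}" "a = (\<chi> i. s i / 2)"
    | (golden) s p where "\<forall>i. s i \<in> {-1, 1}" "p permutes (UNIV :: 4 set)"
        "a = (\<chi> i. s (p i) * (vector [0, 1, t', t] :: real^4) $ (p i) / 2)"
    using a unfolding roots_def by blast
  then show ?thesis
  proof cases
    case axis
    then show ?thesis using exhaust_4[of k] sign[OF axis(1)] by (auto simp: inner_vec_def sum_4)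
  next
    case half
    then show ?thesis using sign by (simp add: inner_vec_def sum_4 field_simps)
  next
    case golden
    define v where "v = (vector [0, 1, t', t] :: real^4)"
    have "a \<bullet> a = (\<Sum>i\<in>UNIV. (v $ p i)\<^sup>2 / 4)"
      using golden sign unfolding inner_vec_def v_def
      by (intro sum.cong) (auto simp: power2_eq_square field_simps)
    also have "\<dots> = (\<Sum>i\<in>UNIV. (v $ i)\<^sup>2 / 4)"
      using sum.permute[OF golden(2), of "\<lambda>i. (v $ i)\<^sup>2 / 4"] by (simp add: comp_def)
    also have "\<dots> = 1" using t by (simp add: sum_4 v_def vector_def)
    finally show ?thesis .
  qed
qed

lemma Delta_unit: "a \<in> Delta \<union> Delta' \<Longrightarrow> a \<bullet> a = 1"
proof -
  have "tau'\<^sup>2 + tau\<^sup>2 = 3" "tau\<^sup>2 + tau'\<^sup>2 = 3"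
    by (simp_all add: tau_def tau'_def power2_eq_square field_simps)
  then show "a \<in> Delta \<union> Delta' \<Longrightarrow> a \<bullet> a = 1"
    unfolding Delta_def Delta'_def using roots_unit by blast
qed

lemma reflmat_Delta_in_Hinf: "a \<in> Delta \<union> Delta' \<Longrightarrow> reflmat a \<in> Hinf"
  unfolding Hinf_def H4_def H4'_def by (auto intro: gen_group.gen)

lemma Hinf_mult: "A \<in> Hinf \<Longrightarrow> B \<in> Hinf \<Longrightarrow> A ** B \<in> Hinf"
  unfolding Hinf_def by (rule gen_group.mult)

lemma Hinf_subset_O4: "Hinf \<subseteq> O4"
proof -
  have "reflmat ` (Delta \<union> Delta') \<subseteq> O4"
    using Delta_unit orthogonal_matrix_reflmat by (auto simp: O4_def)
  then show ?thesis
    unfolding Hinf_def H4_def H4'_def by (intro gen_group_subset_O4) (auto intro!: gen_group_subset_O4)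
qed

lemma Sigma_roots_unit: "\<sigma> \<in> Sigma_roots \<Longrightarrow> \<sigma> \<bullet> \<sigma> = 1"
  using Hinf_subset_O4 Delta_unit orthogonal_matrix_inner
  by (fastforce simp: Sigma_roots_def O4_def)

lemma Hinf_mult_Sigma_roots: "A \<in> Hinf \<Longrightarrow> \<sigma> \<in> Sigma_roots \<Longrightarrow> A *v \<sigma> \<in> Sigma_roots"
  unfolding Sigma_roots_def using Hinf_mult by (fastforce simp: matrix_vector_mul_assoc)

lemma Delta_subset_Sigma_roots: "Delta \<union> Delta' \<subseteq> Sigma_roots"
  unfolding Sigma_roots_def Hinf_def by (force intro: gen_group.one)

lemma reflect_Delta_in_Sigma_roots:
  "a \<in> Delta \<union> Delta' \<Longrightarrow> \<sigma> \<in> Sigma_roots \<Longrightarrow> reflect a \<sigma> \<in> Sigma_roots"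
  using Hinf_mult_Sigma_roots[OF reflmat_Delta_in_Hinf] by (simp add: reflmat_vector_mult)

lemma reflmat_Sigma_roots_in_Hinf:
  assumes "\<sigma> \<in> Sigma_roots"
  shows "reflmat \<sigma> \<in> Hinf"
proof -
  obtain A a where A: "A \<in> Hinf" and a: "a \<in> Delta \<union> Delta'" and \<sigma>: "\<sigma> = A *v a"
    using assms unfolding Sigma_roots_def by blast
  have "orthogonal_matrix A" using A Hinf_subset_O4 by (auto simp: O4_def)
  then have "reflmat \<sigma> = A ** reflmat a ** matrix_inv A"
    by (simp add: \<sigma> reflmat_conjugate matrix_inv_orthogonal)
  with A reflmat_Delta_in_Hinf[OF a] show ?thesis
    unfolding Hinf_def by (auto intro: gen_group.intros)
qed

lemma reflmat_commutator_in_commutator_subgroup: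
  assumes "a \<in> Sigma_roots" "b \<in> Sigma_roots"
  shows "reflmat a ** reflmat b ** reflmat a ** reflmat b \<in> commutator_subgroup Hinf"
proof -
  have "reflmat a ** reflmat b ** matrix_inv (reflmat a) ** matrix_inv (reflmat b)
      \<in> commutator_subgroup Hinf"
    unfolding commutator_subgroup_def
    using assms by (blast intro: gen_group.gen reflmat_Sigma_roots_in_Hinf)
  then show ?thesis using assms by (simp add: matrix_inv_reflmat Sigma_roots_unit)
qed

lemma commutator_subgroup_mult:
  "A \<in> commutator_subgroup G \<Longrightarrow> B \<in> commutator_subgroup G \<Longrightarrow> A ** B \<in> commutator_subgroup G"
  unfolding commutator_subgroup_def by (rule gen_group.mult)

lemma commutator_subgroup_subset_Hinf: "commutator_subgroup Hinf \<subseteq> Hinf"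
  unfolding commutator_subgroup_def
  by (rule gen_group_least) (auto simp: Hinf_def intro: gen_group.intros)

lemma commutator_subgroup_subset_SO4: "commutator_subgroup Hinf \<subseteq> SO4"
  unfolding commutator_subgroup_def
proof (rule gen_group_subset_SO4, safe)
  fix A B assume "A \<in> Hinf" "B \<in> Hinf"
  then have A: "orthogonal_matrix A" and B: "orthogonal_matrix B"
    using Hinf_subset_O4 by (auto simp: O4_def)
  have "det A * det A = 1" "det B * det B = 1"
    using det_orthogonal_matrix[OF A] det_orthogonal_matrix[OF B] by auto
  with A B show "A ** B ** matrix_inv A ** matrix_inv B \<in> SO4"
    by (simp add: SO4_def matrix_inv_orthogonal orthogonal_matrix_mul det_mul algebra_simps)
qed

text \<open>The commutator of the reflections in two roots at angle \<open>\<theta>\<close> is the rotation by \<open>4\<theta>\<close>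
  in their plane; \<open>8w\<^sup>4 - 8w\<^sup>2 + 1 = cos 4\<theta>\<close> for \<open>w = cos \<theta>\<close>.\<close>
lemma root_plane_rotation_in_closure_commutator_subgroup:
  assumes a: "a \<in> Sigma_roots" and b: "b \<in> Sigma_roots"
    and w: "a \<bullet> b = w" "w\<^sup>2 < 1"
    and k: "32 * (8 * w ^ 4 - 8 * w\<^sup>2 + 1) = of_int k" "odd k"
    and p: "p = \<alpha> *\<^sub>R a + \<beta> *\<^sub>R b" and p': "p' = \<gamma> *\<^sub>R a + \<delta> *\<^sub>R b"
    and pp: "p \<bullet> p = 1" "p' \<bullet> p' = 1" "p \<bullet> p' = 0"
  shows "plane_rotation_matrix p p' t \<in> closure (commutator_subgroup Hinf)"
proof -
  have aa: "a \<bullet> a = 1" and bb: "b \<bullet> b = 1" using a b by (simp_all add: Sigma_roots_unit)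
  define \<theta> where "\<theta> = arccos w"
  have w1: "\<bar>w\<bar> < 1" using w(2) by (simp add: abs_square_less_1)
  then have cos: "cos \<theta> = w" and sin: "sin \<theta> = sqrt (1 - w\<^sup>2)"
    unfolding \<theta>_def by (simp_all add: cos_arccos_abs sin_arccos_abs)
  have sin_pos: "sin \<theta> > 0" using w(2) by (simp add: sin)
  have sin2: "(sin \<theta>)\<^sup>2 = 1 - w\<^sup>2" using w(2) by (simp add: sin)
  define q where "q = (1 / sin \<theta>) *\<^sub>R (b - w *\<^sub>R a)"
  have b_eq: "b = cos \<theta> *\<^sub>R a + sin \<theta> *\<^sub>R q" using sin_pos by (simp add: q_def cos)
  have aq: "a \<bullet> q = 0" using aa w(1) by (simp add: q_def inner_diff_right)
  have qq: "q \<bullet> q = 1"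
    using aa bb w(1) sin_pos sin2
    by (simp add: q_def inner_diff_left inner_diff_right inner_commute power2_eq_square field_simps)
  have "reflmat a ** reflmat b ** reflmat a ** reflmat b = plane_rotation_matrix a q (- (4 * \<theta>))"
    by (simp add: matrix_eq reflmat_vector_mult plane_rotation_matrix_vector_mult
        reflect_commutator_eq_plane_rotation[OF aa qq aq b_eq] flip: matrix_vector_mul_assoc)
  then have commutator: "plane_rotation_matrix a q (- (4 * \<theta>)) \<in> commutator_subgroup Hinf"
    using reflmat_commutator_in_commutator_subgroup[OF a b] by simp
  have "cos (- (4 * \<theta>)) = 2 * (cos (2 * \<theta>))\<^sup>2 - 1"
    using cos_double_cos[of "2 * \<theta>"] by simp
  also have "cos (2 * \<theta>) = 2 * w\<^sup>2 - 1" using cos_double_cos[of \<theta>] by (simp add: cos)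
  finally have "cos (- (4 * \<theta>)) = 8 * w ^ 4 - 8 * w\<^sup>2 + 1" by algebra
  then have "- (4 * \<theta>) / (2 * pi) \<notin> \<rat>"
    using k by (intro irrational_angle_of_cos_odd_div_32) auto
  then have dense: "plane_rotation_matrix a q s \<in> closure (commutator_subgroup Hinf)" for s
    using plane_rotation_matrix_in_closure[OF aa qq aq commutator_subgroup_mult commutator] by blast
  obtain e where "e = 1 \<or> e = -1" "\<And>t. plane_rotation p p' t = plane_rotation a q (e * t)"
    using plane_rotation_change_frame[OF aa qq aq _ _ pp,
        of "\<alpha> + \<beta> * w" "\<beta> * sin \<theta>" "\<gamma> + \<delta> * w" "\<delta> * sin \<theta>"]
    unfolding p p' b_eq cos by (auto simp: algebra_simps)
  then have "plane_rotation_matrix p p' t = plane_rotation_matrix a q (e * t)"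
    by (simp add: matrix_eq plane_rotation_matrix_vector_mult)
  with dense show ?thesis by simp
qed

section \<open>Three planes of dense rotations\<close>

lemma inner_vec4: "(x :: real^4) \<bullet> y = x$1 * y$1 + x$2 * y$2 + x$3 * y$3 + x$4 * y$4"
  by (simp add: inner_vec_def sum_4)

lemma vector4_nth [simp]:
  "(vector [a, b, c, d] :: real^4) $ 1 = a" "(vector [a, b, c, d] :: real^4) $ 2 = b"
  "(vector [a, b, c, d] :: real^4) $ 3 = c" "(vector [a, b, c, d] :: real^4) $ 4 = d"
  by (simp_all add: vector_def)

lemma golden_rootI:
  "\<forall>i. s i \<in> {-1, 1} \<Longrightarrow> p permutes UNIV \<Longrightarrow> evenperm p \<Longrightarrow>
   a = (\<chi> i. s (p i) * (vector [0, 1, t', t] :: real^4) $ p i / 2) \<Longrightarrow> a \<in> roots t t'"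
  unfolding roots_def by blast

text \<open>Three pairs in \<open>\<Sigma>\<close> with inner products \<open>-1/4\<close> (\<open>rU, rV\<close>), \<open>3/4\<close> (\<open>rE1, sD\<close>) and
  \<open>1/4\<close> (\<open>rE1, sX\<close>), for which \<open>32 cos 4\<theta>\<close> is \<open>17\<close>, \<open>-31\<close> and \<open>17\<close>.\<close>
definition rE1 :: "real^4" where "rE1 = vector [1, 0, 0, 0]"
definition rU :: "real^4" where "rU = vector [0, 1/2, tau'/2, tau/2]"
definition rV :: "real^4" where "rV = vector [0, 1/2, tau/2, tau'/2]"
definition rW :: "real^4" where "rW = vector [0, 1/2, tau'/2, - tau/2]"
definition rR0 :: "real^4" where "rR0 = vector [1/2, 0, - tau'/2, - tau/2]"
definition rR1 :: "real^4" where "rR1 = vector [0, tau'/2, tau/2, 1/2]"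
definition rX0 :: "real^4" where "rX0 = vector [1/2, - tau'/2, tau/2, 0]"
definition rX1 :: "real^4" where "rX1 = vector [tau'/2, 0, tau/2, -1/2]"

lemma rE1_in_Delta: "rE1 \<in> Delta"
proof -
  have "rE1 = (\<chi> i. if i = 1 then 1 else 0)" by (simp add: rE1_def vec_eq_iff forall_4)
  then show ?thesis unfolding Delta_def roots_def by blast
qed

lemma rU_in_Delta: "rU \<in> Delta"
  unfolding Delta_def
  by (rule golden_rootI[where s="\<lambda>i. 1" and p=id]) (auto simp: rU_def vec_eq_iff forall_4)

lemma rV_in_Delta': "rV \<in> Delta'"
  unfolding Delta'_def
  by (rule golden_rootI[where s="\<lambda>i. 1" and p=id]) (auto simp: rV_def vec_eq_iff forall_4)

lemma rW_in_Delta: "rW \<in> Delta"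
  unfolding Delta_def
  by (rule golden_rootI[where s="\<lambda>i. if i = 4 then -1 else 1" and p=id])
     (auto simp: rW_def vec_eq_iff forall_4)

lemma rR0_in_Delta': "rR0 \<in> Delta'"
  unfolding Delta'_def
  by (rule golden_rootI[where s="\<lambda>i. if i = 3 \<or> i = 4 then -1 else 1"
        and p="Transposition.transpose 1 2 \<circ> Transposition.transpose 3 4"])
     (auto simp: rR0_def vec_eq_iff forall_4 Transposition.transpose_def evenperm_comp
       permutation_swap_id evenperm_swap intro!: permutes_compose permutes_swap_id)

lemma rR1_in_Delta: "rR1 \<in> Delta"
  unfolding Delta_def
  by (rule golden_rootI[where s="\<lambda>i. 1"
        and p="Transposition.transpose 2 3 \<circ> Transposition.transpose 3 4"])
     (auto simp: rR1_def vec_eq_iff forall_4 Transposition.transpose_def evenperm_comp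
       permutation_swap_id evenperm_swap intro!: permutes_compose permutes_swap_id)

lemma rX0_in_Delta': "rX0 \<in> Delta'"
  unfolding Delta'_def
  by (rule golden_rootI[where s="\<lambda>i. if i = 4 then -1 else 1"
        and p="Transposition.transpose 1 2 \<circ> Transposition.transpose 2 4"])
     (auto simp: rX0_def vec_eq_iff forall_4 Transposition.transpose_def evenperm_comp
       permutation_swap_id evenperm_swap intro!: permutes_compose permutes_swap_id)

lemma rX1_in_Delta': "rX1 \<in> Delta'"
  unfolding Delta'_def
  by (rule golden_rootI[where s="\<lambda>i. if i = 2 then -1 else 1"
        and p="Transposition.transpose 1 4 \<circ> Transposition.transpose 4 2"])
     (auto simp: rX1_def vec_eq_iff forall_4 Transposition.transpose_def evenperm_comp
       permutation_swap_id evenperm_swap intro!: permutes_compose permutes_swap_id)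

definition sD :: "real^4" where "sD = vector [3/4, (-1 + 3 * sqrt 5) / 16, (2 + sqrt 5) / 8, (-5 + sqrt 5) / 16]"
definition sX :: "real^4" where "sX = vector [1/4, sqrt 5 / 4, - sqrt 5 / 4, - sqrt 5 / 4]"

lemma sD_in_Sigma_roots: "sD \<in> Sigma_roots"
proof -
  have "reflect rR1 (reflect rR0 rU) = sD"
    unfolding vec_eq_iff forall_4 reflect_def inner_vec4 rR1_def rR0_def rU_def sD_def tau_def tau'_def
    by (simp add: field_simps; algebra)
  then show ?thesis
    using rR0_in_Delta' rR1_in_Delta rU_in_Delta Delta_subset_Sigma_roots
    by (metis UnI1 UnI2 reflect_Delta_in_Sigma_roots subsetD)
qed

lemma sX_in_Sigma_roots: "sX \<in> Sigma_roots"
proof -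
  have "reflect rX1 (reflect rX0 rW) = sX"
    unfolding vec_eq_iff forall_4 reflect_def inner_vec4 rX1_def rX0_def rW_def sX_def tau_def tau'_def
    by (simp add: field_simps; algebra)
  then show ?thesis
    using rX0_in_Delta' rX1_in_Delta' rW_in_Delta Delta_subset_Sigma_roots
    by (metis UnI1 UnI2 reflect_Delta_in_Sigma_roots subsetD)
qed

text \<open>\<open>rE1\<close> is orthogonal to the plane of \<open>rU, rV\<close>, which meets the plane of \<open>rE1, sD\<close> in the
  line of \<open>frame2\<close>; \<open>frame3\<close> completes \<open>rE1\<close> to a basis of the plane of \<open>rE1, sX\<close>.\<close>
definition dir1 :: "real^4" where "dir1 = vector [0, -9 - sqrt 5, -6 + 4 * sqrt 5, -3 - 5 * sqrt 5]"
definition dir2 :: "real^4" where "dir2 = vector [0, -1 + 3 * sqrt 5, 4 + 2 * sqrt 5, -5 + sqrt 5]"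
definition dir3 :: "real^4" where "dir3 = vector [0, 1, -1, -1]"
definition frame1 :: "real^4" where "frame1 = (1 / sqrt 336) *\<^sub>R dir1"
definition frame2 :: "real^4" where "frame2 = (1 / sqrt 112) *\<^sub>R dir2"
definition frame3 :: "real^4" where "frame3 = (1 / sqrt 3) *\<^sub>R dir3"

lemma frame_orthonormal:
  "rE1 \<bullet> rE1 = 1" "frame1 \<bullet> frame1 = 1" "frame2 \<bullet> frame2 = 1" "frame3 \<bullet> frame3 = 1"
  "rE1 \<bullet> frame1 = 0" "rE1 \<bullet> frame2 = 0" "rE1 \<bullet> frame3 = 0"
  "frame1 \<bullet> frame2 = 0" "frame1 \<bullet> frame3 = 0" "frame2 \<bullet> frame3 = 0" "frame2 \<bullet> frame1 = 0"
proof -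
  have "dir1 \<bullet> dir1 = 336" "dir2 \<bullet> dir2 = 112" "dir3 \<bullet> dir3 = 3"
    "dir1 \<bullet> dir2 = 0" "dir1 \<bullet> dir3 = 0" "dir2 \<bullet> dir3 = 0" "dir2 \<bullet> dir1 = 0"
    "rE1 \<bullet> dir1 = 0" "rE1 \<bullet> dir2 = 0" "rE1 \<bullet> dir3 = 0"
    by (simp_all add: inner_vec4 dir1_def dir2_def dir3_def rE1_def algebra_simps power2_eq_square)
  then show "rE1 \<bullet> rE1 = 1" "frame1 \<bullet> frame1 = 1" "frame2 \<bullet> frame2 = 1" "frame3 \<bullet> frame3 = 1"
    "rE1 \<bullet> frame1 = 0" "rE1 \<bullet> frame2 = 0" "rE1 \<bullet> frame3 = 0"
    "frame1 \<bullet> frame2 = 0" "frame1 \<bullet> frame3 = 0" "frame2 \<bullet> frame3 = 0" "frame2 \<bullet> frame1 = 0"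
    by (simp_all add: frame1_def frame2_def frame3_def) (simp add: inner_vec4 rE1_def)
qed

lemma frame_in_root_planes:
  "frame1 = ((-18 - 2/5 * sqrt 5) / sqrt 336) *\<^sub>R rU + ((-8/5 * sqrt 5) / sqrt 336) *\<^sub>R rV"
  "frame2 = ((-2 + 6/5 * sqrt 5) / sqrt 112) *\<^sub>R rU + ((24/5 * sqrt 5) / sqrt 112) *\<^sub>R rV"
  "frame2 = (-12 / sqrt 112) *\<^sub>R rE1 + (16 / sqrt 112) *\<^sub>R sD"
  "frame3 = ((- sqrt 5 / 5) / sqrt 3) *\<^sub>R rE1 + ((4 * sqrt 5 / 5) / sqrt 3) *\<^sub>R sX"
proof -
  have d1: "dir1 = (-18 - 2/5 * sqrt 5) *\<^sub>R rU + (-8/5 * sqrt 5) *\<^sub>R rV"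
    and d2: "dir2 = (-2 + 6/5 * sqrt 5) *\<^sub>R rU + (24/5 * sqrt 5) *\<^sub>R rV"
    and d2': "dir2 = (-12) *\<^sub>R rE1 + 16 *\<^sub>R sD"
    and d3: "dir3 = (- sqrt 5 / 5) *\<^sub>R rE1 + (4 * sqrt 5 / 5) *\<^sub>R sX"
    by (simp_all add: vec_eq_iff forall_4 dir1_def dir2_def dir3_def rU_def rV_def rE1_def
        sD_def sX_def tau_def tau'_def field_simps; algebra)+
  show "frame1 = ((-18 - 2/5 * sqrt 5) / sqrt 336) *\<^sub>R rU + ((-8/5 * sqrt 5) / sqrt 336) *\<^sub>R rV"
    unfolding frame1_def d1 by (simp only: scaleR_add_right scaleR_scaleR) simp
  show "frame2 = ((-2 + 6/5 * sqrt 5) / sqrt 112) *\<^sub>R rU + ((24/5 * sqrt 5) / sqrt 112) *\<^sub>R rV"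
    unfolding frame2_def d2 by (simp only: scaleR_add_right scaleR_scaleR) simp
  show "frame2 = (-12 / sqrt 112) *\<^sub>R rE1 + (16 / sqrt 112) *\<^sub>R sD"
    unfolding frame2_def d2' by (simp only: scaleR_add_right scaleR_scaleR) simp
  show "frame3 = ((- sqrt 5 / 5) / sqrt 3) *\<^sub>R rE1 + ((4 * sqrt 5 / 5) / sqrt 3) *\<^sub>R sX"
    unfolding frame3_def d3 by (simp only: scaleR_add_right scaleR_scaleR) (simp add: mult.commute)
qed

lemma orthogonal_frame_eq_0:
  assumes "rE1 \<bullet> z = 0" "frame1 \<bullet> z = 0" "frame2 \<bullet> z = 0" "frame3 \<bullet> z = 0"
  shows "z = 0"
proof -
  have "dir1 \<bullet> z = 0" "dir2 \<bullet> z = 0" "dir3 \<bullet> z = 0"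
    using assms by (simp_all add: frame1_def frame2_def frame3_def)
  then have z: "z $ 1 = 0"
    "(-9 - sqrt 5) * z $ 2 + (-6 + 4 * sqrt 5) * z $ 3 + (-3 - 5 * sqrt 5) * z $ 4 = 0"
    "(-1 + 3 * sqrt 5) * z $ 2 + (4 + 2 * sqrt 5) * z $ 3 + (-5 + sqrt 5) * z $ 4 = 0"
    "z $ 2 - z $ 3 - z $ 4 = 0"
    using assms(1) by (simp_all add: inner_vec4 rE1_def dir1_def dir2_def dir3_def)
  have "sqrt 5 * sqrt 5 = (5 :: real)" by simp
  with z have "z $ 2 = 0" "z $ 3 = 0" "z $ 4 = 0" by algebra+
  with z(1) show ?thesis by (simp add: vec_eq_iff forall_4)
qed

lemma frame_expansion:
  "y = (frame1 \<bullet> y) *\<^sub>R frame1 + (frame2 \<bullet> y) *\<^sub>R frame2 + (rE1 \<bullet> y) *\<^sub>R rE1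
     + (frame3 \<bullet> y) *\<^sub>R frame3"
proof -
  have "y - ((frame1 \<bullet> y) *\<^sub>R frame1 + (frame2 \<bullet> y) *\<^sub>R frame2 + (rE1 \<bullet> y) *\<^sub>R rE1
      + (frame3 \<bullet> y) *\<^sub>R frame3) = 0"
    using frame_orthonormal
    by (intro orthogonal_frame_eq_0) (simp_all add: inner_diff_right inner_add_right inner_commute)
  then show ?thesis by simp
qed

lemma frame_plane_rotations_in_closure_commutator_subgroup:
  "plane_rotation_matrix frame2 frame1 t \<in> closure (commutator_subgroup Hinf)"
  "plane_rotation_matrix rE1 frame2 t \<in> closure (commutator_subgroup Hinf)"
  "plane_rotation_matrix rE1 frame3 t \<in> closure (commutator_subgroup Hinf)"
proof -
  have roots: "rU \<in> Sigma_roots" "rV \<in> Sigma_roots" "rE1 \<in> Sigma_roots"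
    using rU_in_Delta rV_in_Delta' rE1_in_Delta Delta_subset_Sigma_roots by auto
  have "rU \<bullet> rV = -1/4"
    by (simp add: inner_vec4 rU_def rV_def tau_def tau'_def field_simps; algebra)
  then show "plane_rotation_matrix frame2 frame1 t \<in> closure (commutator_subgroup Hinf)"
    by (rule root_plane_rotation_in_closure_commutator_subgroup[OF roots(1,2) _ _ _ _
          frame_in_root_planes(2,1), where k = 17])
       (simp_all add: frame_orthonormal power2_eq_square power_divide)
  have "rE1 \<bullet> sD = 3/4" by (simp add: inner_vec4 rE1_def sD_def)
  then show "plane_rotation_matrix rE1 frame2 t \<in> closure (commutator_subgroup Hinf)"
    by (rule root_plane_rotation_in_closure_commutator_subgroup[OF roots(3) sD_in_Sigma_roots _ _ _ _
          _ frame_in_root_planes(3), where k = "-31" and \<alpha> = 1 and \<beta> = 0])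
       (simp_all add: frame_orthonormal power2_eq_square power_divide)
  have "rE1 \<bullet> sX = 1/4" by (simp add: inner_vec4 rE1_def sX_def)
  then show "plane_rotation_matrix rE1 frame3 t \<in> closure (commutator_subgroup Hinf)"
    by (rule root_plane_rotation_in_closure_commutator_subgroup[OF roots(3) sX_in_Sigma_roots _ _ _ _
          _ frame_in_root_planes(4), where k = 17 and \<alpha> = 1 and \<beta> = 0])
       (simp_all add: frame_orthonormal power2_eq_square power_divide)
qed

lemma closure_Hinf_mult_closure_Sigma_roots:
  "A \<in> closure Hinf \<Longrightarrow> y \<in> closure Sigma_roots \<Longrightarrow> A *v y \<in> closure Sigma_roots"
proof (rule image2_closure_subset[where f = "(*v)"])
  show "continuous_on UNIV (\<lambda>z. fst z *v (snd z :: real^4))"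
    unfolding matrix_vector_mult_def by (intro continuous_intros)
qed (use Hinf_mult_Sigma_roots in auto)

lemma closure_Sigma_roots_eq_sphere: "closure Sigma_roots = sphere (0 :: real^4) 1"
proof
  show "closure Sigma_roots \<subseteq> sphere 0 1"
    using Sigma_roots_unit by (intro closure_minimal) (auto simp: norm_eq_1)
  show "sphere 0 1 \<subseteq> closure Sigma_roots"
  proof
    fix y :: "real^4" assume "y \<in> sphere 0 1"
    then have "y \<bullet> y = 1" by (simp add: norm_eq_1)
    then obtain \<alpha> \<beta> \<gamma> where y: "y = plane_rotation rE1 frame3 \<gamma>
        (plane_rotation frame2 frame1 \<alpha> (plane_rotation rE1 frame2 \<beta> rE1))"
      using unit_vector_eq_plane_rotations[OF frame_orthonormal(1-4) frame_orthonormal(5-7)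
          frame_orthonormal(8-10) frame_expansion] by metis
    have rotations: "plane_rotation_matrix rE1 frame3 \<gamma> \<in> closure Hinf"
      "plane_rotation_matrix frame2 frame1 \<alpha> \<in> closure Hinf"
      "plane_rotation_matrix rE1 frame2 \<beta> \<in> closure Hinf"
      using frame_plane_rotations_in_closure_commutator_subgroup
        closure_mono[OF commutator_subgroup_subset_Hinf] by auto
    have "rE1 \<in> closure Sigma_roots"
      using rE1_in_Delta Delta_subset_Sigma_roots closure_subset by auto
    with rotations show "y \<in> closure Sigma_roots"
      unfolding y by (simp add: closure_Hinf_mult_closure_Sigma_roots flip: plane_rotation_matrix_vector_mult)
  qed
qed

lemma reflmat_in_closure_Hinf:
  assumes "u \<bullet> u = 1"
  shows "reflmat u \<in> closure Hinf"
proof -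
  have "reflmat ` closure Sigma_roots \<subseteq> closure Hinf"
    using reflmat_Sigma_roots_in_Hinf closure_subset
    by (intro image_closure_subset[OF continuous_on_reflmat closed_closure]) blast
  with assms show ?thesis by (auto simp: closure_Sigma_roots_eq_sphere norm_eq_1)
qed

lemma reflmat_mult_reflmat_in_closure_commutator_subgroup:
  assumes u: "u \<bullet> u = 1" and v: "v \<bullet> v = 1"
  shows "reflmat u ** reflmat v \<in> closure (commutator_subgroup Hinf)"
proof (cases "u = v")
  case True
  then show ?thesis
    using u closure_subset gen_group.one
    by (fastforce simp: reflmat_reflmat commutator_subgroup_def)
next
  case False
  define w where "w = (1 / norm (u - v)) *\<^sub>R (u - v)"
  note swap = reflect_swap[OF u v False, folded w_def]
  have "reflmat v = reflmat w ** reflmat u ** reflmat w"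
    using reflmat_conjugate[OF orthogonal_matrix_reflmat[OF swap(1)], of u] swap(2)
    by (simp add: reflmat_vector_mult transpose_reflmat)
  then have "reflmat u ** reflmat v = reflmat u ** reflmat w ** reflmat u ** reflmat w"
    by (simp add: matrix_mul_assoc)
  moreover have "reflmat u ** reflmat w ** reflmat u ** reflmat w \<in> closure (commutator_subgroup Hinf)"
  proof (rule image2_closure_subset[where f = "\<lambda>a b. reflmat a ** reflmat b ** reflmat a ** reflmat b"
        and A = Sigma_roots and B = Sigma_roots])
    show "continuous_on UNIV (\<lambda>z. reflmat (fst z) ** reflmat (snd z) ** reflmat (fst z) ** reflmat (snd z))"
      unfolding matrix_matrix_mult_def reflmat_def by (intro continuous_intros)
  qed (use u swap(1) reflmat_commutator_in_commutator_subgroup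
         in \<open>auto simp: closure_Sigma_roots_eq_sphere norm_eq_1\<close>)
  ultimately show ?thesis by simp
qed

lemma closure_Hinf_eq_O4: "closure Hinf = O4"
proof
  show "closure Hinf \<subseteq> O4"
    using Hinf_subset_O4 closed_orthogonal_matrices by (intro closure_minimal) (auto simp: O4_def)
  show "O4 \<subseteq> closure Hinf"
  proof
    fix A assume "A \<in> O4"
    then obtain us where us: "\<forall>u\<in>set us. u \<bullet> u = 1" and A: "A = reflmat_prod us"
      using orthogonal_matrix_eq_reflmat_prod by (auto simp: O4_def)
    have "reflmat_prod us \<in> closure Hinf" using us
    proof (induction us)
      case Nil
      then show ?case using closure_subset gen_group.one by (fastforce simp: Hinf_def)
    next
      case (Cons u us)
      then show ?case
        by (auto intro: closure_matrix_mult_closed Hinf_mult reflmat_in_closure_Hinf)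
    qed
    then show "A \<in> closure Hinf" by (simp add: A)
  qed
qed

lemma closure_commutator_subgroup_eq_SO4: "closure (commutator_subgroup Hinf) = SO4"
proof
  show "closure (commutator_subgroup Hinf) \<subseteq> SO4"
    using commutator_subgroup_subset_SO4 closed_rotation_matrices
    by (intro closure_minimal) (auto simp: SO4_def)
  show "SO4 \<subseteq> closure (commutator_subgroup Hinf)"
  proof
    fix A assume A: "A \<in> SO4"
    then obtain us where us: "\<forall>u\<in>set us. u \<bullet> u = 1" and A_eq: "A = reflmat_prod us"
      using orthogonal_matrix_eq_reflmat_prod by (auto simp: SO4_def)
    have "even (length us)"
      using A det_reflmat_prod[OF us] by (auto simp: SO4_def A_eq minus_one_power_iff split: if_splits)
    then have "reflmat_prod us \<in> closure (commutator_subgroup Hinf)" using us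
    proof (induction us rule: induct_list012)
      case 1
      then show ?case
        using closure_subset gen_group.one by (fastforce simp: commutator_subgroup_def)
    next
      case (3 u v us)
      then show ?case
        using reflmat_mult_reflmat_in_closure_commutator_subgroup[of u v]
          closure_matrix_mult_closed[OF commutator_subgroup_mult]
        by (simp add: matrix_mul_assoc)
    qed simp
    then show "A \<in> closure (commutator_subgroup Hinf)" by (simp add: A_eq)
  qed
qed

theorem mainTheorem4:
  shows "closure (commutator_subgroup Hinf) = SO4
       \<and> closure Hinf = O4
       \<and> closure Sigma_roots = sphere (0 :: real^4) 1"
  using closure_commutator_subgroup_eq_SO4 closure_Hinf_eq_O4 closure_Sigma_roots_eq_sphere by blast

end
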